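(* Let $H$ be a finite abelian group and $k$ a positive integer. Suppose that for infinitely many primes $p$, every non-zero sum subset of size $k$ of $(\mathbb{Z}_p \times H) \setminus \{0_{\mathbb{Z}_p\times H}\}$ is sequenceable. Then for every positive integer $m$ all of whose prime factors are greater than $k!/2$, every non-zero sum subset of size $k$ of $(\mathbb{Z}_m \times H) \setminus \{0_{\mathbb{Z}_m\times H}\}$ is sequenceable.
   Context: For a finite subset $S$ of an abelian group with $|S| = k$, an ordering $(x_1,\dots,x_k)$ of $S$ has partial sums $(y_0,\dots,y_k)$ with $y_0 = 0$, $y_i = x_1+\cdots+x_i$. It is a sequencing if the $y_i$ are pairwise distinct, and a rotational sequencing if they are pairwise distinct except that $y_k = y_0 = 0$; $S$ is sequenceable if it has one or the other. $S$ is non-zero sum if the sum of its elements is nonzero. *)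

theory Defs
  imports Main "HOL-Computational_Algebra.Primes"
begin

text \<open>The group Z_m x H, where H is a finite abelian group given as a type of class
  ab_group_add (the whole type is the group).\<close>

definition ZH_carrier :: "nat \<Rightarrow> (nat \<times> 'h::ab_group_add) set" where
  "ZH_carrier m = {x. fst x < m}"

definition ZH_zero :: "nat \<times> 'h::ab_group_add" where
  "ZH_zero = (0, 0)"

definition ZH_add :: "nat \<Rightarrow> nat \<times> 'h::ab_group_add \<Rightarrow> nat \<times> 'h \<Rightarrow> nat \<times> 'h" where
  "ZH_add m x y = ((fst x + fst y) mod m, snd x + snd y)"

definition ZH_psum :: "nat \<Rightarrow> (nat \<times> 'h::ab_group_add) list \<Rightarrow> nat \<Rightarrow> nat \<times> 'h" where
  "ZH_psum m xs i = foldl (ZH_add m) ZH_zero (take i xs)"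

definition ZH_setsum :: "nat \<Rightarrow> (nat \<times> 'h::ab_group_add) set \<Rightarrow> nat \<times> 'h" where
  "ZH_setsum m S = ((\<Sum>x\<in>S. fst x) mod m, (\<Sum>x\<in>S. snd x))"

definition ordering_of :: "'a list \<Rightarrow> 'a set \<Rightarrow> bool" where
  "ordering_of xs S \<longleftrightarrow> distinct xs \<and> set xs = S"

definition ZH_sequencing :: "nat \<Rightarrow> (nat \<times> 'h::ab_group_add) list \<Rightarrow> bool" where
  "ZH_sequencing m xs \<longleftrightarrow> inj_on (ZH_psum m xs) {0..length xs}"

definition ZH_rot_sequencing :: "nat \<Rightarrow> (nat \<times> 'h::ab_group_add) list \<Rightarrow> bool" where
  "ZH_rot_sequencing m xs \<longleftrightarrow>
     inj_on (ZH_psum m xs) {0..<length xs} \<and> ZH_psum m xs (length xs) = ZH_zero"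

definition ZH_sequenceable :: "nat \<Rightarrow> (nat \<times> 'h::ab_group_add) set \<Rightarrow> bool" where
  "ZH_sequenceable m S \<longleftrightarrow>
     (\<exists>xs. ordering_of xs S \<and> (ZH_sequencing m xs \<or> ZH_rot_sequencing m xs))"

definition ZH_nonzero_sum :: "nat \<Rightarrow> (nat \<times> 'h::ab_group_add) set \<Rightarrow> bool" where
  "ZH_nonzero_sum m S \<longleftrightarrow> ZH_setsum m S \<noteq> ZH_zero"

definition all_seq :: "nat \<Rightarrow> nat \<Rightarrow> 'h::ab_group_add itself \<Rightarrow> bool" where
  "all_seq m k _ \<longleftrightarrow> (\<forall>S::(nat \<times> 'h) set. S \<subseteq> ZH_carrier m - {ZH_zero} \<and> card S = k
       \<and> ZH_nonzero_sum m S \<longrightarrow> ZH_sequenceable m S)"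

end

(*
  Write the elements of S as (a_i, h_i), i < k. Which subsets of S sum to zero is decided by the
  h_i together with the family R of index sets T with sum_{i in T} a_i = 0 (mod m). Choose a maximal
  nonsingular square submatrix of the 0/1 incidence matrix of R. Its determinant d satisfies
  2 |d| <= max 2 k! < 2 q for every prime q dividing m, so d is prime to m, and Cramer's rule yields
  integers c_i with sum_{i in T} c_i = 0 for all T in R and c_i = d a_i (mod m). Hence
  sum_{i in T} c_i = 0 exactly for the T in R, and c_i = c_j forces a_i = a_j. Reducing the c_i
  modulo a prime p > sum_i |c_i| from the hypothesis gives a set S' in Z_p x H with the same
  zero-sum subsets as S. Two partial sums of an ordering coincide exactly when the segment between
  them sums to zero, so a (rotational) sequencing of S' transfers to S.
*)
theory Submission
  imports Defs Jordan_Normal_Form.Determinant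
begin

section \<open>Determinants of 0/1 matrices\<close>

lemma det_mat_2:
  fixes M :: "'a :: comm_ring_1 mat"
  assumes "M \<in> carrier_mat 2 2"
  shows "det M = M $$ (0,0) * M $$ (1,1) - M $$ (0,1) * M $$ (1,0)"
proof -
  have "det M = (\<Sum>j<2. M $$ (0,j) * cofactor M 0 j)"
    using laplace_expansion_row[OF assms, of 0] by simp
  then show ?thesis
    using assms by (simp add: numeral_2_eq_2 cofactor_def det_single mat_delete_carrier mat_delete_def)
qed

lemma det_01_mat_bound:
  fixes M :: "int mat"
  assumes "M \<in> carrier_mat r r" "\<And>i j. i < r \<Longrightarrow> j < r \<Longrightarrow> M $$ (i,j) \<in> {0, 1}"
  shows "2 * \<bar>det M\<bar> \<le> max 2 (fact r)"
  using assms
proof (induction r arbitrary: M rule: less_induct)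
  case (less r)
  have "r \<le> 2 \<or> r = Suc (r - 1) \<and> r - 1 \<ge> 2"
    by arith
  then consider "r = 0" | "r = 1" | "r = 2" | r' where "r = Suc r'" "r' \<ge> 2"
    by (auto simp: le_Suc_eq numeral_2_eq_2)
  then show ?case
  proof cases
    case 1
    then show ?thesis using less.prems by simp
  next
    case 2
    then show ?thesis using less.prems det_single[of M] by fastforce
  next
    case 3
    then have "M $$ (0,0) \<in> {0, 1}" "M $$ (1,1) \<in> {0, 1}" "M $$ (0,1) \<in> {0, 1}" "M $$ (1,0) \<in> {0, 1}"
      using less.prems by auto
    then show ?thesis
      using det_mat_2[of M] less.prems(1) 3 by auto
  next
    case 4
    have "2 \<le> (fact r' :: int)"
      using fact_mono[where 'a = int, of 2 r'] 4 by simp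
    have "det M = (\<Sum>j<r. M $$ (0,j) * cofactor M 0 j)"
      using laplace_expansion_row[of M r 0] less.prems 4 by simp
    then have "2 * \<bar>det M\<bar> \<le> (\<Sum>j<r. 2 * \<bar>M $$ (0,j) * cofactor M 0 j\<bar>)"
      by (simp add: sum_abs flip: sum_distrib_left)
    also have "\<dots> \<le> (\<Sum>j<r. fact r')"
    proof (rule sum_mono)
      fix j assume "j \<in> {..<r}"
      then have "mat_delete M 0 j \<in> carrier_mat r' r'"
        and "\<And>i l. i < r' \<Longrightarrow> l < r' \<Longrightarrow> mat_delete M 0 j $$ (i,l) \<in> {0, 1}"
        and "M $$ (0,j) \<in> {0, 1}"
        using less.prems 4 by (auto simp: mat_delete_def)
      then show "2 * \<bar>M $$ (0,j) * cofactor M 0 j\<bar> \<le> fact r'"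
        using less.IH[of r' "mat_delete M 0 j"] 4 \<open>2 \<le> fact r'\<close> by (auto simp: cofactor_def abs_mult)
    qed
    also have "\<dots> = fact r"
      using 4 by (simp add: fact_Suc)
    finally show ?thesis
      by simp
  qed
qed

lemma coprime_det_01_mat:
  fixes M :: "int mat"
  assumes "M \<in> carrier_mat r r" "\<And>i j. i < r \<Longrightarrow> j < r \<Longrightarrow> M $$ (i,j) \<in> {0, 1}"
    and "det M \<noteq> 0" "r \<le> n"
    and "\<And>q. prime q \<Longrightarrow> q dvd m \<Longrightarrow> 2 * q > fact n"
  shows "coprime (det M) (int m)"
proof (rule ccontr)
  assume "\<not> coprime (det M) (int m)"
  have "gcd (nat \<bar>det M\<bar>) m \<noteq> 1"
  proof
    assume "gcd (nat \<bar>det M\<bar>) m = 1"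
    then have "coprime (int (nat \<bar>det M\<bar>)) (int m)"
      by (simp add: coprime_iff_gcd_eq_1 coprime_int_iff)
    then show False
      using \<open>\<not> coprime (det M) (int m)\<close> by simp
  qed
  then obtain q where "prime q" "q dvd gcd (nat \<bar>det M\<bar>) m"
    using prime_factor_nat by blast
  then have q: "prime q" "q dvd nat \<bar>det M\<bar>" "q dvd m"
    by (meson dvd_trans gcd_dvd1 gcd_dvd2)+
  then have "q \<le> nat \<bar>det M\<bar>"
    using \<open>det M \<noteq> 0\<close> by (simp add: dvd_imp_le)
  then have "int q \<le> \<bar>det M\<bar>"
    by linarith
  moreover have "max 2 (fact r) \<le> (max 2 (fact n) :: int)"
    using fact_mono[where 'a = int, OF \<open>r \<le> n\<close>] by linarith
  moreover have "max 2 (fact n) < 2 * int q"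
  proof -
    have "fact n < (of_nat (2 * q) :: int)"
      using assms(5)[OF q(1,3)] by (metis of_nat_fact of_nat_less_iff)
    then show ?thesis
      using prime_ge_2_nat[OF q(1)] by simp
  qed
  ultimately show False
    using det_01_mat_bound[OF assms(1,2)] by linarith
qed

lemma dvd_det_mult_of_dvd_mult_mat_vec:
  fixes B :: "'a :: comm_ring_1 mat"
  assumes B: "B \<in> carrier_mat r r" and v: "v \<in> carrier_vec r"
    and dvd: "\<And>i. i < r \<Longrightarrow> m dvd (B *\<^sub>v v) $ i"
    and "y < r"
  shows "m dvd det B * v $ y"
proof -
  have "det B * v $ y = ((det B \<cdot>\<^sub>m 1\<^sub>m r) *\<^sub>v v) $ y"
    using v \<open>y < r\<close> by simp
  also have "\<dots> = (adj_mat B *\<^sub>v (B *\<^sub>v v)) $ y"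
    using assoc_mult_mat_vec[OF adj_mat(1)[OF B] B v] adj_mat(3)[OF B] by simp
  also have "\<dots> = (\<Sum>i<r. adj_mat B $$ (y,i) * (B *\<^sub>v v) $ i)"
    using B adj_mat(1)[OF B] \<open>y < r\<close> by (simp add: scalar_prod_def row_def atLeast0LessThan)
  also have "m dvd \<dots>"
    using dvd by (intro dvd_sum dvd_mult) simp
  finally show ?thesis .
qed

section \<open>Integer kernel vectors of incidence matrices\<close>

definition incidence_mat :: "nat set list \<Rightarrow> nat list \<Rightarrow> int mat" where
  "incidence_mat Ts js = mat (length Ts) (length js) (\<lambda>(x, y). if js ! y \<in> Ts ! x then 1 else 0)"

lemma incidence_mat_carrier: "incidence_mat Ts js \<in> carrier_mat (length Ts) (length js)"
  by (simp add: incidence_mat_def)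

lemma incidence_mat_index [simp]:
  "x < length Ts \<Longrightarrow> y < length js \<Longrightarrow>
    incidence_mat Ts js $$ (x, y) = (if js ! y \<in> Ts ! x then 1 else 0)"
  by (simp add: incidence_mat_def)

lemma incidence_mat_mult_vec:
  assumes "z < length Ts" "distinct js" "finite (Ts ! z)"
    and "\<And>i. i \<in> Ts ! z \<Longrightarrow> i \<notin> set js \<Longrightarrow> f i = 0"
  shows "(incidence_mat Ts js *\<^sub>v vec (length js) (\<lambda>y. f (js ! y))) $ z = (\<Sum>i\<in>Ts ! z. f i)"
proof -
  have "(incidence_mat Ts js *\<^sub>v vec (length js) (\<lambda>y. f (js ! y))) $ z
      = (\<Sum>y<length js. if js ! y \<in> Ts ! z then f (js ! y) else 0)"
    using assms(1) by (auto simp: incidence_mat_def scalar_prod_def atLeast0LessThan intro!: sum.cong)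
  also have "\<dots> = (\<Sum>i\<in>set js. if i \<in> Ts ! z then f i else 0)"
    using assms(2) by (simp add: sum_list_distinct_conv_sum_set[symmetric] sum_list_sum_nth atLeast0LessThan)
  also have "\<dots> = (\<Sum>i\<in>set js \<inter> Ts ! z. f i)"
    by (simp add: sum.inter_restrict)
  also have "\<dots> = (\<Sum>i\<in>Ts ! z. f i)"
    using assms(3,4) by (intro sum.mono_neutral_left) auto
  finally show ?thesis .
qed

lemma dvd_of_dvd_incidence_row_sums:
  fixes e :: "nat \<Rightarrow> int"
  assumes "length Ts = length js" "distinct js"
    and coprime: "coprime (det (incidence_mat Ts js)) (int m)"
    and rows: "\<And>z. z < length Ts \<Longrightarrow> finite (Ts ! z) \<and> int m dvd (\<Sum>i\<in>Ts ! z. e i)"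
    and vanish: "\<And>z i. z < length Ts \<Longrightarrow> i \<in> Ts ! z \<Longrightarrow> i \<notin> set js \<Longrightarrow> e i = 0"
    and "j \<in> set js"
  shows "int m dvd e j"
proof -
  define r B where "r = length js" and "B = incidence_mat Ts js"
  have B: "B \<in> carrier_mat r r"
    using incidence_mat_carrier[of Ts js] assms(1) by (simp add: B_def r_def)
  have "int m dvd (B *\<^sub>v vec r (\<lambda>y. e (js ! y))) $ z" if "z < r" for z
  proof -
    have "(B *\<^sub>v vec r (\<lambda>y. e (js ! y))) $ z = (\<Sum>i\<in>Ts ! z. e i)"
      unfolding B_def r_def
      using incidence_mat_mult_vec[of z Ts js e] that assms(1,2) rows[of z] vanish[of z] by (simp add: r_def)
    then show ?thesis
      using rows[of z] that assms(1) by (simp add: r_def)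
  qed
  then have "int m dvd det B * e (js ! y)" if "y < r" for y
    using dvd_det_mult_of_dvd_mult_mat_vec[OF B, of "vec r (\<lambda>y. e (js ! y))" "int m" y] that
    by simp
  then show ?thesis
    using coprime \<open>j \<in> set js\<close>
    by (auto simp: B_def r_def in_set_conv_nth coprime_commute coprime_dvd_mult_right_iff)
qed

(* The cofactors of the last row of the minor bordered by the column j, spread over the columns
   js and j: by Laplace expansion along that row, the sum of border_vec over T is the determinant
   of the minor bordered by the row T and the column j (Cramer's rule). *)
definition border_vec :: "nat set list \<Rightarrow> nat list \<Rightarrow> nat \<Rightarrow> nat \<Rightarrow> int" where
  "border_vec Ts js j i = (if i = j then det (incidence_mat Ts js) else 0)
     + (\<Sum>y<length js. if js ! y = i
          then cofactor (incidence_mat (Ts @ [{}]) (js @ [j])) (length js) y else 0)"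

lemma det_incidence_mat_snoc:
  assumes "length Ts = length js" "finite T"
  shows "det (incidence_mat (Ts @ [T]) (js @ [j])) = (\<Sum>i\<in>T. border_vec Ts js j i)"
proof -
  let ?r = "length js" and ?M = "incidence_mat (Ts @ [T]) (js @ [j])"
  have M: "?M \<in> carrier_mat (Suc ?r) (Suc ?r)"
    using assms incidence_mat_carrier[of "Ts @ [T]" "js @ [j]"] by simp
  have cofactor: "cofactor ?M ?r y = cofactor (incidence_mat (Ts @ [{}]) (js @ [j])) ?r y" for y
    using assms by (auto simp: cofactor_def mat_delete_def incidence_mat_def nth_append intro!: arg_cong[where f = det])
  have diag: "cofactor (incidence_mat (Ts @ [{}]) (js @ [j])) ?r ?r = det (incidence_mat Ts js)"
    using assms by (auto simp: cofactor_def mat_delete_def incidence_mat_def nth_append intro!: arg_cong[where f = det])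
  have "det ?M = (\<Sum>y<Suc ?r. ?M $$ (?r, y) * cofactor ?M ?r y)"
    using laplace_expansion_row[OF M, of ?r] by simp
  also have "\<dots> = (if j \<in> T then det (incidence_mat Ts js) else 0)
      + (\<Sum>y<?r. if js ! y \<in> T then cofactor (incidence_mat (Ts @ [{}]) (js @ [j])) ?r y else 0)"
    using assms(1) by (simp add: nth_append cofactor diag if_distrib[of "\<lambda>x. x * _"] cong: if_cong)
  also have "\<dots> = (\<Sum>i\<in>T. border_vec Ts js j i)"
    using assms(2) by (simp add: border_vec_def sum.distrib sum.swap[where A = T] sum.delta')
  finally show ?thesis .
qed

lemma maximal_nonsingular_incidence_minor:
  obtains Ts js where "length Ts = length js" "set Ts \<subseteq> R" "set js \<subseteq> {..<n}" "distinct js"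
    "det (incidence_mat Ts js) \<noteq> 0"
    "\<And>T j. T \<in> R \<Longrightarrow> j < n \<Longrightarrow> j \<notin> set js \<Longrightarrow> det (incidence_mat (Ts @ [T]) (js @ [j])) = 0"
proof -
  define nonsingular where "nonsingular r \<longleftrightarrow> (\<exists>Ts js. length Ts = r \<and> length js = r \<and>
      set Ts \<subseteq> R \<and> set js \<subseteq> {..<n} \<and> distinct js \<and> det (incidence_mat Ts js) \<noteq> 0)" for r
  have "nonsingular 0"
    unfolding nonsingular_def by (auto simp: incidence_mat_def)
  have bounded: "r \<le> n" if "nonsingular r" for r
    using that unfolding nonsingular_def by (metis card_lessThan card_mono distinct_card finite_lessThan)
  define r where "r = Max (Collect nonsingular)"
  have fin: "finite (Collect nonsingular)"
    using bounded by (meson finite_nat_set_iff_bounded_le mem_Collect_eq)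
  have "nonsingular r"
    unfolding r_def using Max_in[OF fin] \<open>nonsingular 0\<close> by auto
  then obtain Ts js where Ts_js: "length Ts = r" "length js = r" "set Ts \<subseteq> R" "set js \<subseteq> {..<n}"
    "distinct js" "det (incidence_mat Ts js) \<noteq> 0"
    unfolding nonsingular_def by blast
  have maximal: "det (incidence_mat (Ts @ [T]) (js @ [j])) = 0" if "T \<in> R" "j < n" "j \<notin> set js" for T j
  proof (rule ccontr)
    assume "det (incidence_mat (Ts @ [T]) (js @ [j])) \<noteq> 0"
    then have "nonsingular (Suc r)"
      unfolding nonsingular_def using Ts_js that
      by (intro exI[of _ "Ts @ [T]"] exI[of _ "js @ [j]"]) auto
    then show False
      using Max_ge[OF fin] r_def by fastforce
  qed
  show thesis
    using that[of Ts js] Ts_js maximal by simp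
qed

lemma exists_integer_kernel_vector_congruent:
  fixes a :: "nat \<Rightarrow> int"
  assumes primes: "\<And>q. prime q \<Longrightarrow> q dvd m \<Longrightarrow> 2 * q > fact n"
    and R_sub: "\<And>T. T \<in> R \<Longrightarrow> T \<subseteq> {..<n}"
    and R_dvd: "\<And>T. T \<in> R \<Longrightarrow> int m dvd (\<Sum>i\<in>T. a i)"
  obtains c d where "coprime d (int m)" "\<And>T. T \<in> R \<Longrightarrow> (\<Sum>i\<in>T. c i) = 0"
    "\<And>i. i < n \<Longrightarrow> int m dvd c i - d * a i"
proof -
  obtain Ts js where Ts_js: "length Ts = length js" "set Ts \<subseteq> R" "set js \<subseteq> {..<n}" "distinct js"
    and nonsingular: "det (incidence_mat Ts js) \<noteq> 0"
    and maximal: "\<And>T j. T \<in> R \<Longrightarrow> j < n \<Longrightarrow> j \<notin> set js \<Longrightarrow>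
      det (incidence_mat (Ts @ [T]) (js @ [j])) = 0"
    using maximal_nonsingular_incidence_minor[of R n] by blast
  define r B d where "r = length js" and "B = incidence_mat Ts js" and "d = det B"
  have B: "B \<in> carrier_mat r r"
    using incidence_mat_carrier[of Ts js] Ts_js(1) by (simp add: B_def r_def)
  have "r \<le> n"
    using Ts_js(3,4) unfolding r_def by (metis card_lessThan card_mono distinct_card finite_lessThan)
  then have coprime: "coprime d (int m)"
    using coprime_det_01_mat[OF B _ _ _ primes] nonsingular Ts_js(1) by (simp add: B_def d_def r_def)
  define rest where "rest = {..<n} - set js"
  have "finite rest"
    by (simp add: rest_def)
  \<comment> \<open>By maximality, \<open>border_vec Ts js j\<close> sums to zero over every \<open>T \<in> R\<close> when \<open>j \<in> rest\<close>.\<close>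
  define c where "c i = (\<Sum>j\<in>rest. a j * border_vec Ts js j i)" for i
  have kernel: "(\<Sum>i\<in>T. c i) = 0" if "T \<in> R" for T
  proof -
    have "finite T"
      using R_sub[OF that] finite_subset by blast
    then have "(\<Sum>i\<in>T. c i) = (\<Sum>j\<in>rest. a j * det (incidence_mat (Ts @ [T]) (js @ [j])))"
      using Ts_js(1) by (simp add: c_def det_incidence_mat_snoc sum_distrib_left sum.swap[where A = T])
    also have "\<dots> = 0"
      using maximal[OF that] by (simp add: rest_def)
    finally show ?thesis .
  qed
  define e where "e i = c i - d * a i" for i
  have e_rest: "e i = 0" if "i \<in> rest" for i
  proof -
    have "border_vec Ts js j i = (if i = j then d else 0)" for j
      using that by (auto simp: border_vec_def rest_def B_def d_def intro!: sum.neutral)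
    then show ?thesis
      using that \<open>finite rest\<close>
      by (simp add: e_def c_def if_distrib[of "\<lambda>x. _ * x"] sum.delta' mult.commute cong: if_cong)
  qed
  have rows: "finite (Ts ! z) \<and> int m dvd (\<Sum>i\<in>Ts ! z. e i)" if "z < length Ts" for z
  proof -
    have T: "Ts ! z \<in> R"
      using that Ts_js(2) nth_mem by blast
    then have "finite (Ts ! z)"
      using R_sub finite_subset by blast
    moreover have "(\<Sum>i\<in>Ts ! z. e i) = - d * (\<Sum>i\<in>Ts ! z. a i)"
      using kernel[OF T] by (simp add: e_def sum_subtractf flip: sum_distrib_left)
    ultimately show ?thesis
      using R_dvd[OF T] by simp
  qed
  have "int m dvd e i" if "i < n" for i
  proof (cases "i \<in> set js")
    case True
    show ?thesis
    proof (rule dvd_of_dvd_incidence_row_sums[OF Ts_js(1,4) _ rows _ True])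
      show "coprime (det (incidence_mat Ts js)) (int m)"
        using coprime by (simp add: B_def d_def)
      show "e i' = 0" if "z < length Ts" "i' \<in> Ts ! z" "i' \<notin> set js" for z i'
        using that e_rest R_sub Ts_js(2) nth_mem unfolding rest_def by blast
    qed
  next
    case False
    then show ?thesis
      using that e_rest by (simp add: rest_def)
  qed
  then show thesis
    using that[OF coprime kernel] by (simp add: e_def)
qed

lemma exists_integer_model_of_zero_sums_mod:
  fixes a :: "nat \<Rightarrow> int"
  assumes "\<And>q. prime q \<Longrightarrow> q dvd m \<Longrightarrow> 2 * q > fact n"
  obtains c :: "nat \<Rightarrow> int" where
    "\<And>T. T \<subseteq> {..<n} \<Longrightarrow> (\<Sum>i\<in>T. c i) = 0 \<longleftrightarrow> int m dvd (\<Sum>i\<in>T. a i)"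
    "\<And>i j. i < n \<Longrightarrow> j < n \<Longrightarrow> c i = c j \<Longrightarrow> int m dvd a i - a j"
proof -
  obtain c d where coprime: "coprime (int m) d"
    and kernel: "\<And>T. T \<subseteq> {..<n} \<Longrightarrow> int m dvd (\<Sum>i\<in>T. a i) \<Longrightarrow> (\<Sum>i\<in>T. c i) = 0"
    and congruent: "\<And>i. i < n \<Longrightarrow> int m dvd c i - d * a i"
    by (rule exists_integer_kernel_vector_congruent[where R = "{T. T \<subseteq> {..<n} \<and> int m dvd (\<Sum>i\<in>T. a i)}"])
      (use assms in \<open>auto simp: coprime_commute\<close>)
  have "int m dvd (\<Sum>i\<in>T. a i)" if "T \<subseteq> {..<n}" "(\<Sum>i\<in>T. c i) = 0" for T
  proof -
    have "int m dvd (\<Sum>i\<in>T. c i - d * a i)"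
      using that(1) congruent by (auto intro: dvd_sum)
    then show ?thesis
      using that(2) coprime by (simp add: sum_subtractf coprime_dvd_mult_right_iff flip: sum_distrib_left)
  qed
  moreover have "int m dvd a i - a j" if "i < n" "j < n" "c i = c j" for i j
  proof -
    have "int m dvd (c j - d * a j) - (c i - d * a i)"
      using dvd_diff[OF congruent[OF that(2)] congruent[OF that(1)]] .
    then show ?thesis
      using that(3) coprime by (simp add: coprime_dvd_mult_right_iff flip: right_diff_distrib)
  qed
  ultimately show thesis
    using that kernel by blast
qed

section \<open>Reduction modulo a large prime\<close>

lemma dvd_imp_eq_0_of_abs_less:
  fixes q x :: int
  assumes "q dvd x" "\<bar>x\<bar> < \<bar>q\<bar>"
  shows "x = 0"
proof (rule ccontr)
  assume "x \<noteq> 0"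
  then have "\<bar>q\<bar> \<le> \<bar>x\<bar>"
    using dvd_imp_le_int assms(1) by blast
  then show False
    using assms(2) by simp
qed

lemma eq_of_mod_eq_of_abs_add_less:
  fixes q x y :: int
  assumes "x mod q = y mod q" "\<bar>x\<bar> + \<bar>y\<bar> < q"
  shows "x = y"
proof -
  have "q dvd x - y"
    using assms(1) by (simp add: mod_eq_dvd_iff)
  moreover have "\<bar>x - y\<bar> < \<bar>q\<bar>"
    using assms(2) abs_triangle_ineq4[of x y] by linarith
  ultimately show ?thesis
    using dvd_imp_eq_0_of_abs_less[of q "x - y"] by simp
qed

lemma dvd_sum_nat_mod_iff_sum_eq_0:
  fixes c :: "'i \<Rightarrow> int"
  assumes "(\<Sum>i\<in>T. \<bar>c i\<bar>) < int p"
  shows "p dvd (\<Sum>i\<in>T. nat (c i mod int p)) \<longleftrightarrow> (\<Sum>i\<in>T. c i) = 0"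
proof -
  have "0 \<le> (\<Sum>i\<in>T. \<bar>c i\<bar>)"
    by (simp add: sum_nonneg)
  then have "p > 0"
    using assms by linarith
  then have "int (\<Sum>i\<in>T. nat (c i mod int p)) = (\<Sum>i\<in>T. c i mod int p)"
    by simp
  then have "p dvd (\<Sum>i\<in>T. nat (c i mod int p)) \<longleftrightarrow> int p dvd (\<Sum>i\<in>T. c i mod int p)"
    by (metis int_dvd_int_iff)
  also have "\<dots> \<longleftrightarrow> int p dvd (\<Sum>i\<in>T. c i)"
    by (simp add: dvd_eq_mod_eq_0 mod_sum_eq)
  also have "\<dots> \<longleftrightarrow> (\<Sum>i\<in>T. c i) = 0"
    using dvd_imp_eq_0_of_abs_less[of "int p" "\<Sum>i\<in>T. c i"] assms sum_abs[of c T] by auto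
  finally show ?thesis .
qed

lemma exists_mod_prime_model_of_zero_sums_mod:
  fixes a :: "nat \<Rightarrow> int"
  assumes "infinite P" and primes: "\<And>q. prime q \<Longrightarrow> q dvd m \<Longrightarrow> 2 * q > fact n"
  obtains p and b :: "nat \<Rightarrow> nat" where "p \<in> P" "\<And>i. b i < p"
    "\<And>T. T \<subseteq> {..<n} \<Longrightarrow> p dvd (\<Sum>i\<in>T. b i) \<longleftrightarrow> int m dvd (\<Sum>i\<in>T. a i)"
    "\<And>i j. i < n \<Longrightarrow> j < n \<Longrightarrow> b i = b j \<Longrightarrow> int m dvd a i - a j"
proof -
  obtain c :: "nat \<Rightarrow> int"
    where c_zero: "\<And>T. T \<subseteq> {..<n} \<Longrightarrow> (\<Sum>i\<in>T. c i) = 0 \<longleftrightarrow> int m dvd (\<Sum>i\<in>T. a i)"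
      and c_eq: "\<And>i j. i < n \<Longrightarrow> j < n \<Longrightarrow> c i = c j \<Longrightarrow> int m dvd a i - a j"
    using exists_integer_model_of_zero_sums_mod[where a = a and m = m and n = n] primes by blast
  obtain p where "p \<in> P" and p_large: "p > (\<Sum>i<n. nat \<bar>c i\<bar>)"
    using \<open>infinite P\<close> unfolding infinite_nat_iff_unbounded by blast
  have small: "(\<Sum>i\<in>T. \<bar>c i\<bar>) < int p" if "T \<subseteq> {..<n}" for T
  proof -
    have "(\<Sum>i\<in>T. \<bar>c i\<bar>) \<le> (\<Sum>i<n. \<bar>c i\<bar>)"
      using that by (intro sum_mono2) auto
    also have "\<dots> = int (\<Sum>i<n. nat \<bar>c i\<bar>)"
      by simp
    finally show ?thesis
      using p_large by linarith
  qed
  define b where "b i = nat (c i mod int p)" for i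
  have "p > 0"
    using p_large by simp
  then have b_less: "b i < p" for i
    by (simp add: b_def nat_less_iff)
  have b_zero: "p dvd (\<Sum>i\<in>T. b i) \<longleftrightarrow> int m dvd (\<Sum>i\<in>T. a i)" if "T \<subseteq> {..<n}" for T
    using dvd_sum_nat_mod_iff_sum_eq_0[OF small[OF that]] c_zero[OF that] by (simp add: b_def)
  have b_eq: "int m dvd a i - a j" if "i < n" "j < n" "b i = b j" for i j
  proof (cases "i = j")
    case False
    have "c i mod int p = c j mod int p"
      using that(3) \<open>p > 0\<close> by (simp add: b_def eq_nat_nat_iff)
    moreover have "\<bar>c i\<bar> + \<bar>c j\<bar> < int p"
      using small[of "{i, j}"] that False by simp
    ultimately have "c i = c j"
      by (rule eq_of_mod_eq_of_abs_add_less)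
    then show ?thesis
      using c_eq that by blast
  qed simp
  show thesis
    by (rule that[OF \<open>p \<in> P\<close> b_less b_zero b_eq])
qed

section \<open>Partial sums and sequencings in \<open>Z_m \<times> H\<close>\<close>

lemma foldl_ZH_add:
  "x mod m = x \<Longrightarrow> foldl (ZH_add m) (x, y) zs
     = ((x + sum_list (map fst zs)) mod m, y + sum_list (map snd zs))"
proof (induction zs arbitrary: x y)
  case (Cons z zs)
  have "foldl (ZH_add m) (x, y) (z # zs) = foldl (ZH_add m) ((x + fst z) mod m, y + snd z) zs"
    by (simp add: ZH_add_def)
  also have "\<dots> = (((x + fst z) mod m + sum_list (map fst zs)) mod m, y + snd z + sum_list (map snd zs))"
    by (rule Cons.IH) simp
  finally show ?case
    by (simp add: mod_add_left_eq add.assoc)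
qed simp

lemma ZH_psum_eq:
  assumes "i \<le> length xs"
  shows "ZH_psum m xs i = ((\<Sum>l<i. fst (xs ! l)) mod m, \<Sum>l<i. snd (xs ! l))"
  using foldl_ZH_add[of 0 m 0 "take i xs"] assms
  by (simp add: ZH_psum_def ZH_zero_def sum_list_sum_nth atLeast0LessThan min_def)

lemma ZH_setsum_image:
  assumes "inj_on f A"
  shows "ZH_setsum m (f ` A) = ((\<Sum>i\<in>A. fst (f i)) mod m, \<Sum>i\<in>A. snd (f i))"
  using assms by (simp add: ZH_setsum_def sum.reindex)

lemma ZH_setsum_singleton: "x \<in> ZH_carrier m \<Longrightarrow> ZH_setsum m {x} = x"
  by (simp add: ZH_setsum_def ZH_carrier_def)

lemma ZH_psum_eq_iff_segment_zero_sum: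
  assumes "distinct xs" "i \<le> j" "j \<le> length xs"
  shows "ZH_psum m xs i = ZH_psum m xs j \<longleftrightarrow> ZH_setsum m ((!) xs ` {i..<j}) = ZH_zero"
proof -
  have split: "(\<Sum>l<j. f l) = (\<Sum>l<i. f l) + (\<Sum>l\<in>{i..<j}. f l)" for f :: "nat \<Rightarrow> 'b::comm_monoid_add"
    using assms(2) by (simp add: atLeast0LessThan[symmetric] sum.atLeastLessThan_concat)
  have mod_add_eq_iff: "A mod m = (A + D) mod m \<longleftrightarrow> D mod m = 0" for A D :: nat
    by (metis add_diff_cancel_left' dvd_eq_mod_eq_0 le_add1 mod_eq_dvd_iff_nat)
  have "inj_on ((!) xs) {i..<j}"
    using assms by (simp add: inj_on_nth)
  then show ?thesis
    using assms by (simp add: ZH_psum_eq ZH_setsum_image split mod_add_eq_iff ZH_zero_def)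
qed

lemma inj_on_iff_of_eq_iff:
  fixes f g :: "'a::linorder \<Rightarrow> _"
  assumes "\<And>i j. i \<in> A \<Longrightarrow> j \<in> A \<Longrightarrow> i \<le> j \<Longrightarrow> f i = f j \<longleftrightarrow> g i = g j"
  shows "inj_on f A \<longleftrightarrow> inj_on g A"
  unfolding inj_on_def by (metis assms linear)

lemma ZH_sequencing_iff_of_psum_eq_iff:
  assumes "length xs = length ys"
    and coincide: "\<And>i j. i \<le> j \<Longrightarrow> j \<le> length ys \<Longrightarrow>
      ZH_psum m xs i = ZH_psum m xs j \<longleftrightarrow> ZH_psum p ys i = ZH_psum p ys j"
  shows "ZH_sequencing m xs \<longleftrightarrow> ZH_sequencing p ys"
    and "ZH_rot_sequencing m xs \<longleftrightarrow> ZH_rot_sequencing p ys"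
proof -
  have "ZH_psum m xs 0 = ZH_zero" "ZH_psum p ys 0 = ZH_zero"
    by (simp_all add: ZH_psum_def)
  then have total: "ZH_psum m xs (length xs) = ZH_zero \<longleftrightarrow> ZH_psum p ys (length ys) = ZH_zero"
    using coincide[of 0 "length ys"] assms(1) by (simp add: eq_commute)
  have inj_iff: "inj_on (ZH_psum m xs) A \<longleftrightarrow> inj_on (ZH_psum p ys) A" if "A \<subseteq> {0..length ys}" for A
    using that by (intro inj_on_iff_of_eq_iff coincide) auto
  have "{0..<length ys} \<subseteq> {0..length ys}"
    by auto
  then show "ZH_sequencing m xs \<longleftrightarrow> ZH_sequencing p ys"
    and "ZH_rot_sequencing m xs \<longleftrightarrow> ZH_rot_sequencing p ys"
    using total inj_iff[OF order_refl] inj_iff assms(1)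
    by (auto simp: ZH_sequencing_def ZH_rot_sequencing_def)
qed

lemma ZH_sequenceable_transfer:
  assumes e: "bij_betw e I S" and e': "bij_betw e' I S'"
    and zero_sums: "\<And>T. T \<subseteq> I \<Longrightarrow> ZH_setsum m (e ` T) = ZH_zero \<longleftrightarrow> ZH_setsum p (e' ` T) = ZH_zero"
    and "ZH_sequenceable p S'"
  shows "ZH_sequenceable m S"
proof -
  obtain ys where ys: "distinct ys" "set ys = S'"
    and seq: "ZH_sequencing p ys \<or> ZH_rot_sequencing p ys"
    using \<open>ZH_sequenceable p S'\<close> by (auto simp: ZH_sequenceable_def ordering_of_def)
  define g where "g = e \<circ> inv_into I e'"
  have g: "bij_betw g S' S"
    unfolding g_def using bij_betw_trans[OF bij_betw_inv_into[OF e'] e] .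
  define xs where "xs = map g ys"
  have xs: "distinct xs" "set xs = S" "length xs = length ys"
    using ys g by (auto simp: xs_def distinct_map bij_betw_def)
  have coincide: "ZH_psum m xs i = ZH_psum m xs j \<longleftrightarrow> ZH_psum p ys i = ZH_psum p ys j"
    if "i \<le> j" "j \<le> length ys" for i j
  proof -
    define T where "T = inv_into I e' ` ((!) ys ` {i..<j})"
    have "(!) ys ` {i..<j} \<subseteq> S'"
      using that ys(2) by auto
    then have "e' ` T = (!) ys ` {i..<j}" "T \<subseteq> I"
      using e' by (auto simp: T_def bij_betw_def image_inv_into_cancel inv_into_into)
    moreover have "(!) xs ` {i..<j} = e ` T"
      using that by (auto simp: xs_def T_def g_def image_image)
    ultimately show ?thesis
      using that xs ys ZH_psum_eq_iff_segment_zero_sum zero_sums by metis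
  qed
  have "ZH_sequencing m xs \<longleftrightarrow> ZH_sequencing p ys"
    and "ZH_rot_sequencing m xs \<longleftrightarrow> ZH_rot_sequencing p ys"
    by (rule ZH_sequencing_iff_of_psum_eq_iff[OF xs(3)]; use coincide in blast)+
  then show ?thesis
    using seq xs unfolding ZH_sequenceable_def ordering_of_def by blast
qed

lemma exists_zero_sum_equivalent_model_mod_prime:
  fixes e :: "nat \<Rightarrow> nat \<times> 'h::ab_group_add"
  assumes "infinite P" and primes: "\<And>q. prime q \<Longrightarrow> q dvd m \<Longrightarrow> 2 * q > fact k"
    and e: "inj_on e {..<k}" "e ` {..<k} \<subseteq> ZH_carrier m - {ZH_zero}"
  obtains p and e' :: "nat \<Rightarrow> nat \<times> 'h"
  where "p \<in> P" "inj_on e' {..<k}" "e' ` {..<k} \<subseteq> ZH_carrier p - {ZH_zero}"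
    "\<And>T. T \<subseteq> {..<k} \<Longrightarrow> ZH_setsum m (e ` T) = ZH_zero \<longleftrightarrow> ZH_setsum p (e' ` T) = ZH_zero"
proof -
  define a where "a i = int (fst (e i))" for i
  obtain p and b :: "nat \<Rightarrow> nat" where "p \<in> P" and b_less: "\<And>i. b i < p"
    and b_zero: "\<And>T. T \<subseteq> {..<k} \<Longrightarrow> p dvd (\<Sum>i\<in>T. b i) \<longleftrightarrow> int m dvd (\<Sum>i\<in>T. a i)"
    and b_eq: "\<And>i j. i < k \<Longrightarrow> j < k \<Longrightarrow> b i = b j \<Longrightarrow> int m dvd a i - a j"
    by (rule exists_mod_prime_model_of_zero_sums_mod[where a = a and m = m and n = k])
      (use \<open>infinite P\<close> primes in auto)
  define e' where "e' i = (b i, snd (e i))" for i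
  have "inj_on e' {..<k}"
  proof (rule inj_onI)
    fix i j assume ij: "i \<in> {..<k}" "j \<in> {..<k}" "e' i = e' j"
    have "fst (e i) < m" "fst (e j) < m"
      using e(2) ij(1,2) by (auto simp: ZH_carrier_def)
    then have "\<bar>a i - a j\<bar> < \<bar>int m\<bar>"
      unfolding a_def by linarith
    moreover have "int m dvd a i - a j"
      using b_eq ij by (simp add: e'_def)
    ultimately have "a i = a j"
      using dvd_imp_eq_0_of_abs_less[of "int m" "a i - a j"] by simp
    then have "e i = e j"
      using ij(3) by (simp add: a_def e'_def prod_eq_iff)
    then show "i = j"
      using e(1) ij by (simp add: inj_on_eq_iff)
  qed
  have zero_sums: "ZH_setsum m (e ` T) = ZH_zero \<longleftrightarrow> ZH_setsum p (e' ` T) = ZH_zero"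
    if "T \<subseteq> {..<k}" for T
  proof -
    have "p dvd (\<Sum>i\<in>T. b i) \<longleftrightarrow> m dvd (\<Sum>i\<in>T. fst (e i))"
      using b_zero[OF that] by (simp add: a_def flip: of_nat_sum)
    then show ?thesis
      unfolding ZH_setsum_image[OF inj_on_subset[OF e(1) that]]
        ZH_setsum_image[OF inj_on_subset[OF \<open>inj_on e' {..<k}\<close> that]]
      by (simp add: e'_def ZH_zero_def dvd_eq_mod_eq_0)
  qed
  have carrier: "e' ` {..<k} \<subseteq> ZH_carrier p - {ZH_zero}"
  proof
    fix x assume "x \<in> e' ` {..<k}"
    then obtain i where i: "i < k" "x = e' i"
      by blast
    have "x \<in> ZH_carrier p"
      using i b_less by (simp add: e'_def ZH_carrier_def)
    moreover have "e i \<in> ZH_carrier m - {ZH_zero}"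
      using e(2) i by blast
    ultimately show "x \<in> ZH_carrier p - {ZH_zero}"
      using zero_sums[of "{i}"] i by (auto simp: ZH_setsum_singleton)
  qed
  show thesis
    by (rule that[OF \<open>p \<in> P\<close> \<open>inj_on e' {..<k}\<close> carrier zero_sums])
qed

theorem corollary4p13:
  fixes k :: nat
  assumes "k > 0"
    and "infinite {p::nat. prime p \<and> all_seq p k TYPE('h::{ab_group_add, finite})}"
  shows "\<forall>m::nat. m > 0 \<and> (\<forall>q::nat. prime q \<and> q dvd m \<longrightarrow> 2 * q > fact k)
           \<longrightarrow> all_seq m k TYPE('h)"
proof (intro allI impI)
  fix m :: nat
  assume "m > 0 \<and> (\<forall>q::nat. prime q \<and> q dvd m \<longrightarrow> 2 * q > fact k)"
  then have primes: "\<And>q. prime q \<Longrightarrow> q dvd m \<Longrightarrow> 2 * q > fact k"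
    by blast
  show "all_seq m k TYPE('h)"
    unfolding all_seq_def
  proof (intro allI impI)
    fix S :: "(nat \<times> 'h) set"
    assume S: "S \<subseteq> ZH_carrier m - {ZH_zero} \<and> card S = k \<and> ZH_nonzero_sum m S"
    then obtain e where e: "bij_betw e {..<k} S"
      using \<open>k > 0\<close> ex_bij_betw_nat_finite[of S] by (metis atLeast0LessThan card_gt_0_iff)
    have "inj_on e {..<k}" "e ` {..<k} \<subseteq> ZH_carrier m - {ZH_zero}"
      using e S by (auto simp: bij_betw_def)
    obtain p and e' :: "nat \<Rightarrow> nat \<times> 'h" where "p \<in> {p. prime p \<and> all_seq p k TYPE('h)}"
      and e': "inj_on e' {..<k}" "e' ` {..<k} \<subseteq> ZH_carrier p - {ZH_zero}"
      and zero_sums: "\<And>T. T \<subseteq> {..<k} \<Longrightarrow>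
        ZH_setsum m (e ` T) = ZH_zero \<longleftrightarrow> ZH_setsum p (e' ` T) = ZH_zero"
      by (rule exists_zero_sum_equivalent_model_mod_prime[where m = m and k = k and e = e])
        (use assms(2) primes \<open>inj_on e {..<k}\<close> \<open>e ` {..<k} \<subseteq> _\<close> in auto)
    moreover have "card (e' ` {..<k}) = k" "ZH_nonzero_sum p (e' ` {..<k})"
      using e' zero_sums[of "{..<k}"] S e by (auto simp: card_image ZH_nonzero_sum_def bij_betw_def)
    ultimately have "ZH_sequenceable p (e' ` {..<k})"
      unfolding all_seq_def by blast
    with zero_sums show "ZH_sequenceable m S"
      by (rule ZH_sequenceable_transfer[OF e inj_on_imp_bij_betw[OF e'(1)]])
  qed
qed

end
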